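(* Let $\mathcal{A}$ be an association scheme with splitting field $L$ and let $E\subseteq\mathbb{C}$ be a field containing $L$ that is closed under complex conjugation. A non-zero $E$-linear map $\psi:E[\mathcal{A}]\to E[\mathcal{A}]$ is a Bose–Mesner algebra automorphism of $E[\mathcal{A}]$ if and only if $(MN)^\psi=M^\psi N^\psi$ and $(M\circ N)^\psi=M^\psi\circ N^\psi$ for all $M,N\in E[\mathcal{A}]$.
   Context: An association scheme on $v$ vertices is a set $\mathcal{A}=\{A_0,\ldots,A_d\}$ of $v\times v$ $(0,1)$-matrices with $A_0=I$, $\sum_iA_i=J$, closed under transpose, pairwise commuting, and with all products $A_iA_j$ in the span of $\mathcal{A}$. Its principal idempotents $E_0,\ldots,E_d$ are the pairwise orthogonal Hermitian idempotents summing to $I$ that form a basis of the span, with $A_iE_j=p_i(j)E_j$; the splitting field $L$ is $\mathbb{Q}(p_i(j): i,j)$. $E[\mathcal{A}]$ is the $E$-span of $\mathcal{A}$ and $\circ$ is the Schur (entrywise) product. An $E$-linear map $\psi$ on $E[\mathcal{A}]$ is a Bose–Mesner algebra automorphism if for all $M,N\in E[\mathcal{A}]$: $(MN)^\psi=M^\psi N^\psi$, $(M\circ N)^\psi=M^\psi\circ N^\psi$, $\psi$ is invertible, and $(M^* )^\psi=(M^\psi)^*$ ($M^*$ the conjugate transpose). *)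

theory Defs
  imports "HOL-Analysis.Analysis"
begin

text \<open>Complex v x v matrices are represented as complex^'n^'n, where the
finite type 'n is the vertex set (v = CARD('n)).  An association scheme
with d classes is an indexed family A 0, ..., A d.\<close>

type_synonym 'n cmat = "complex ^'n ^'n"

definition smult_mat :: "complex \<Rightarrow> 'n::finite cmat \<Rightarrow> 'n cmat" (infixr "*\<^sub>m" 75) where
  "c *\<^sub>m M = (\<chi> i j. c * M $ i $ j)"

definition schur :: "'n::finite cmat \<Rightarrow> 'n cmat \<Rightarrow> 'n cmat" (infixl "\<circ>\<^sub>S" 70) where
  "M \<circ>\<^sub>S N = (\<chi> i j. M $ i $ j * N $ i $ j)"

definition ctrans :: "'n::finite cmat \<Rightarrow> 'n cmat" where
  "ctrans M = (\<chi> i j. cnj (M $ j $ i))"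

definition all_ones :: "'n::finite cmat" where
  "all_ones = (\<chi> i j. 1)"

definition zero_one_mat :: "'n::finite cmat \<Rightarrow> bool" where
  "zero_one_mat M \<longleftrightarrow> (\<forall>i j. M $ i $ j = 0 \<or> M $ i $ j = 1)"

definition span_over :: "complex set \<Rightarrow> nat \<Rightarrow> (nat \<Rightarrow> 'n::finite cmat) \<Rightarrow> 'n cmat set" where
  "span_over K d B = {M. \<exists>c. (\<forall>k\<le>d. c k \<in> K) \<and> M = (\<Sum>k\<le>d. c k *\<^sub>m B k)}"

definition assoc_scheme :: "nat \<Rightarrow> (nat \<Rightarrow> 'n::finite cmat) \<Rightarrow> bool" where
  "assoc_scheme d A \<longleftrightarrow>
     A 0 = mat 1 \<and>
     (\<forall>i\<le>d. zero_one_mat (A i) \<and> A i \<noteq> 0) \<and>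
     (\<Sum>i\<le>d. A i) = all_ones \<and>
     (\<forall>i\<le>d. \<exists>j\<le>d. transpose (A i) = A j) \<and>
     (\<forall>i\<le>d. \<forall>j\<le>d. A i ** A j = A j ** A i) \<and>
     (\<forall>i\<le>d. \<forall>j\<le>d. A i ** A j \<in> span_over UNIV d A)"

definition principal_idempotents :: "nat \<Rightarrow> (nat \<Rightarrow> 'n::finite cmat) \<Rightarrow> (nat \<Rightarrow> 'n cmat) \<Rightarrow> bool" where
  "principal_idempotents d A Ep \<longleftrightarrow>
     (\<forall>j\<le>d. Ep j ** Ep j = Ep j \<and> ctrans (Ep j) = Ep j \<and> Ep j \<noteq> 0) \<and>
     (\<forall>j\<le>d. \<forall>k\<le>d. j \<noteq> k \<longrightarrow> Ep j ** Ep k = 0) \<and>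
     (\<Sum>j\<le>d. Ep j) = mat 1 \<and>
     span_over UNIV d Ep = span_over UNIV d A \<and>
     (\<forall>c. (\<Sum>j\<le>d. c j *\<^sub>m Ep j) = 0 \<longrightarrow> (\<forall>j\<le>d. c j = 0))"

definition scheme_eigenvalues :: "nat \<Rightarrow> (nat \<Rightarrow> 'n::finite cmat) \<Rightarrow> complex set" where
  "scheme_eigenvalues d A = {p. \<exists>Ep. principal_idempotents d A Ep \<and>
       (\<exists>i\<le>d. \<exists>j\<le>d. A i ** Ep j = p *\<^sub>m Ep j)}"

definition is_subfield :: "complex set \<Rightarrow> bool" where
  "is_subfield K \<longleftrightarrow> 0 \<in> K \<and> 1 \<in> K \<and>
     (\<forall>x\<in>K. \<forall>y\<in>K. x + y \<in> K \<and> x - y \<in> K \<and> x * y \<in> K) \<and>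
     (\<forall>x\<in>K. x \<noteq> 0 \<longrightarrow> inverse x \<in> K)"

definition splitting_field :: "nat \<Rightarrow> (nat \<Rightarrow> 'n::finite cmat) \<Rightarrow> complex set" where
  "splitting_field d A = \<Inter>{K. is_subfield K \<and> scheme_eigenvalues d A \<subseteq> K}"

definition E_linear_on :: "complex set \<Rightarrow> 'n::finite cmat set \<Rightarrow> ('n cmat \<Rightarrow> 'n cmat) \<Rightarrow> bool" where
  "E_linear_on K S \<psi> \<longleftrightarrow> (\<forall>M\<in>S. \<psi> M \<in> S) \<and>
     (\<forall>M\<in>S. \<forall>N\<in>S. \<psi> (M + N) = \<psi> M + \<psi> N) \<and>
     (\<forall>c\<in>K. \<forall>M\<in>S. \<psi> (c *\<^sub>m M) = c *\<^sub>m \<psi> M)"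

definition BM_automorphism :: "complex set \<Rightarrow> nat \<Rightarrow> (nat \<Rightarrow> 'n::finite cmat) \<Rightarrow> ('n cmat \<Rightarrow> 'n cmat) \<Rightarrow> bool" where
  "BM_automorphism K d A \<psi> \<longleftrightarrow>
     (let S = span_over K d A in
       E_linear_on K S \<psi> \<and>
       (\<forall>M\<in>S. \<forall>N\<in>S. \<psi> (M ** N) = \<psi> M ** \<psi> N) \<and>
       (\<forall>M\<in>S. \<forall>N\<in>S. \<psi> (M \<circ>\<^sub>S N) = \<psi> M \<circ>\<^sub>S \<psi> N) \<and>
       bij_betw \<psi> S S \<and>
       (\<forall>M\<in>S. \<psi> (ctrans M) = ctrans (\<psi> M)))"

end

theory Submission
  imports Defs
begin

text \<open>Every matrix of the Bose-Mesner algebra is constant on the classes of the scheme, so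
  under the Schur product the algebra is just the algebra of functions on the classes. A map
  preserving both products therefore sends the A_k to pairwise disjoint Schur idempotents. The
  image of I is a 0/1 matrix idempotent that commutes with J and has constant diagonal, which
  forces it to be I. As (A_i A_i^T) \<circ> I is a nonzero multiple of I, no A_i is sent to 0, so the
  map permutes the A_k; this gives bijectivity. Finally (A_i A_j) \<circ> I \<noteq> 0 exactly when
  A_j = A_i^T, so the permutation commutes with transposition, which gives compatibility with the
  conjugate transpose. The structure constants are integers.\<close>

lemma cmat_sum_nth: "(sum f S :: 'n::finite cmat) $ x $ y = (\<Sum>k\<in>S. f k $ x $ y)"
  by (simp add: sum_component)

lemma smult_mat_nth [simp]: "(a *\<^sub>m M) $ x $ y = a * M $ x $ y"
  by (simp add: smult_mat_def)

lemma schur_nth [simp]: "(M \<circ>\<^sub>S N) $ x $ y = M $ x $ y * N $ x $ y"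
  by (simp add: schur_def)

lemma ctrans_nth [simp]: "ctrans M $ x $ y = cnj (M $ y $ x)"
  by (simp add: ctrans_def)

lemma matrix_mult_nth: "(M ** N) $ x $ y = (\<Sum>z\<in>UNIV. M $ x $ z * N $ z $ y)"
  by (simp add: matrix_matrix_mult_def)

lemma matrix_mult_sum_left: "(\<Sum>k\<in>F. (B k :: 'n::finite cmat)) ** N = (\<Sum>k\<in>F. B k ** N)"
  by (simp add: vec_eq_iff cmat_sum_nth matrix_mult_nth sum_distrib_right sum.swap[of _ F])

lemma matrix_mult_sum_right: "N ** (\<Sum>k\<in>F. (B k :: 'n::finite cmat)) = (\<Sum>k\<in>F. N ** B k)"
  by (simp add: vec_eq_iff cmat_sum_nth matrix_mult_nth sum_distrib_left sum.swap[of _ F])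

lemma smult_mat_mult_left: "(a *\<^sub>m (M::'n::finite cmat)) ** N = a *\<^sub>m (M ** N)"
  by (simp add: vec_eq_iff matrix_mult_nth sum_distrib_left mult.assoc)

lemma smult_mat_mult_right: "(M::'n::finite cmat) ** (a *\<^sub>m N) = a *\<^sub>m (M ** N)"
  by (simp add: vec_eq_iff matrix_mult_nth sum_distrib_left mult_ac)

lemma smult_mat_commute: "a *\<^sub>m (b *\<^sub>m (M::'n::finite cmat)) = b *\<^sub>m (a *\<^sub>m M)"
  by (simp add: vec_eq_iff mult_ac)

lemma smult_mat_sum: "a *\<^sub>m sum f F = (\<Sum>k\<in>F. a *\<^sub>m (f k :: 'n::finite cmat))"
  by (simp add: vec_eq_iff cmat_sum_nth sum_distrib_left)

lemma of_nat_in_subfield: "is_subfield K \<Longrightarrow> of_nat n \<in> K"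
  by (induction n) (auto simp: is_subfield_def)

lemma row_sum_eq_col_sum_if_commute_all_ones:
  fixes B :: "'n::finite cmat"
  assumes "B ** all_ones = all_ones ** B"
  shows "(\<Sum>z\<in>UNIV. B $ x $ z) = (\<Sum>z\<in>UNIV. B $ z $ y)"
proof -
  have "(\<Sum>z\<in>UNIV. B $ x $ z) = (B ** all_ones) $ x $ y"
    by (simp add: matrix_mult_nth all_ones_def)
  also have "\<dots> = (all_ones ** B) $ x $ y" by (simp only: assms)
  finally show ?thesis by (simp add: matrix_mult_nth all_ones_def)
qed

lemma zero_one_row_sum_eq_card:
  assumes "zero_one_mat B"
  shows "(\<Sum>z\<in>UNIV. B $ x $ z) = of_nat (card {z. B $ x $ z = 1})"
proof -
  have "B $ x $ z = of_bool (B $ x $ z = 1)" for z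
    using assms unfolding zero_one_mat_def by (metis of_bool_eq(1,2) zero_neq_one)
  then have "(\<Sum>z\<in>UNIV. B $ x $ z) = (\<Sum>z\<in>UNIV. of_bool (B $ x $ z = 1))"
    by (intro sum.cong refl)
  then show ?thesis by simp
qed

text \<open>Commuting with the all-ones matrix makes the row sums constant, idempotency forces this
  constant to be 1, so every row has a single 1; idempotency again puts it on the diagonal.\<close>
lemma zero_one_idempotent_eq_1:
  fixes B :: "'n::finite cmat"
  assumes zo: "zero_one_mat B" and idem: "B ** B = B" and nz: "B \<noteq> 0"
    and comm: "B ** all_ones = all_ones ** B" and diag: "\<And>x y. B $ x $ x = B $ y $ y"
  shows "B = mat 1"
proof -
  define r where "r x = (\<Sum>z\<in>UNIV. B $ x $ z)" for x
  have r_const: "r x = r x'" for x x'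
    using row_sum_eq_col_sum_if_commute_all_ones[OF comm, of _ undefined] by (simp add: r_def)
  have r_idem: "r x * r x = r x" for x
  proof -
    have "r x = (\<Sum>z\<in>UNIV. (B ** B) $ x $ z)" by (simp add: r_def idem)
    also have "\<dots> = (\<Sum>y\<in>UNIV. B $ x $ y * r y)"
      unfolding matrix_mult_nth r_def sum_distrib_left by (rule sum.swap)
    also have "\<dots> = (\<Sum>y\<in>UNIV. B $ x $ y * r x)"
      by (intro sum.cong refl) (metis r_const)
    also have "\<dots> = r x * r x" by (simp add: r_def sum_distrib_right)
    finally show ?thesis by simp
  qed
  have one_iff: "B $ x $ y \<noteq> 0 \<longleftrightarrow> B $ x $ y = 1" for x y
    using zo unfolding zero_one_mat_def by (metis zero_neq_one)
  obtain x0 y0 where "B $ x0 $ y0 \<noteq> 0" using nz by (metis vec_eq_iff zero_index)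
  then have "{z. B $ x0 $ z = 1} \<noteq> {}" using one_iff by blast
  then have "r x0 \<noteq> 0" using zero_one_row_sum_eq_card[OF zo, of x0] by (simp add: r_def)
  then have "r x0 = 1" using r_idem[of x0] by simp
  then have "card {z. B $ x $ z = 1} = 1" for x
    using zero_one_row_sum_eq_card[OF zo, of x] r_const[of x x0] unfolding r_def by simp
  then have "\<forall>x. \<exists>w. {z. B $ x $ z = 1} = {w}" by (meson card_1_singletonE)
  then obtain col where col: "\<And>x. {z. B $ x $ z = 1} = {col x}" by metis
  have row: "B $ x $ z = of_bool (z = col x)" for x z
  proof -
    have "B $ x $ z = 1 \<longleftrightarrow> z = col x" using col[of x] by blast
    then show ?thesis using one_iff[of x z] by auto
  qed
  have "B $ col x $ col x = (B ** B) $ x $ col x" for x by (simp add: matrix_mult_nth row)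
  then have "B $ col x $ col x = 1" for x by (simp add: idem row)
  then have "col x = x" for x using diag row[of x x] by (metis of_bool_eq(1) zero_neq_one)
  then show ?thesis by (auto simp: vec_eq_iff mat_def row)
qed

lemma assoc_schemeD:
  assumes "assoc_scheme d A"
  shows assoc_scheme_A_0: "A 0 = mat 1"
    and assoc_scheme_zero_one: "i \<le> d \<Longrightarrow> zero_one_mat (A i)"
    and assoc_scheme_A_neq_0: "i \<le> d \<Longrightarrow> A i \<noteq> 0"
    and assoc_scheme_sum: "(\<Sum>i\<le>d. A i) = all_ones"
    and assoc_scheme_transpose: "i \<le> d \<Longrightarrow> \<exists>j\<le>d. transpose (A i) = A j"
    and assoc_scheme_commute: "i \<le> d \<Longrightarrow> j \<le> d \<Longrightarrow> A i ** A j = A j ** A i"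
    and assoc_scheme_mult: "i \<le> d \<Longrightarrow> j \<le> d \<Longrightarrow> A i ** A j \<in> span_over UNIV d A"
  using assms unfolding assoc_scheme_def by blast+

lemma assoc_scheme_class_function:
  assumes "assoc_scheme d (A :: nat \<Rightarrow> 'n::finite cmat)"
  obtains c where "\<And>x y. c x y \<le> d" and "\<And>k. k \<le> d \<Longrightarrow> A k = (\<chi> x y. of_bool (c x y = k))"
proof -
  have "\<exists>k\<le>d. \<forall>i\<le>d. A i $ x $ y = of_bool (i = k)" for x y
  proof -
    define S where "S = {i. i \<le> d \<and> A i $ x $ y = 1}"
    have zo: "A i $ x $ y = of_bool (i \<in> S)" if i: "i \<le> d" for i
    proof -
      have "A i $ x $ y = 0 \<or> A i $ x $ y = 1"
        using assoc_scheme_zero_one[OF assms i] unfolding zero_one_mat_def by blast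
      then show ?thesis using i by (auto simp: S_def)
    qed
    have "(1::complex) = (\<Sum>i\<le>d. A i) $ x $ y"
      by (simp add: assoc_scheme_sum[OF assms] all_ones_def)
    also have "\<dots> = (\<Sum>i\<le>d. of_bool (i \<in> S))"
      unfolding cmat_sum_nth by (intro sum.cong refl) (simp add: zo)
    also have "\<dots> = of_nat (card ({..d} \<inter> S))" by simp
    also have "{..d} \<inter> S = S" by (auto simp: S_def)
    finally obtain k where k: "S = {k}"
      by (metis card_1_singletonE of_nat_eq_1_iff)
    then have "k \<le> d" by (auto simp: S_def)
    then show ?thesis using zo k by auto
  qed
  then obtain c where "\<forall>x y. c x y \<le> d \<and> (\<forall>i\<le>d. A i $ x $ y = of_bool (i = c x y))"
    by metis
  then show ?thesis by (intro that[of c]) (auto simp: vec_eq_iff)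
qed

locale scheme_classes =
  fixes d :: nat and A :: "nat \<Rightarrow> 'n::finite cmat" and c :: "'n \<Rightarrow> 'n \<Rightarrow> nat"
  assumes scheme: "assoc_scheme d A"
    and class_le: "c x y \<le> d"
    and A_class: "k \<le> d \<Longrightarrow> A k = (\<chi> x y. of_bool (c x y = k))"
begin

definition of_classes :: "(nat \<Rightarrow> complex) \<Rightarrow> 'n cmat" where
  "of_classes f = (\<chi> x y. f (c x y))"

lemma of_classes_nth [simp]: "of_classes f $ x $ y = f (c x y)"
  by (simp add: of_classes_def)

lemma A_nth: "k \<le> d \<Longrightarrow> A k $ x $ y = of_bool (c x y = k)"
  using A_class by simp

lemma A_eq_of_classes: "k \<le> d \<Longrightarrow> A k = of_classes (\<lambda>l. of_bool (l = k))"
  by (simp add: vec_eq_iff A_nth)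

lemma class_surj:
  assumes "k \<le> d" shows "\<exists>x y. c x y = k"
proof -
  have "A k \<noteq> 0" using assoc_scheme_A_neq_0[OF scheme assms] .
  then obtain x y where "A k $ x $ y \<noteq> 0" by (metis vec_eq_iff zero_index)
  then show ?thesis using A_nth[OF assms] by (metis of_bool_eq(1))
qed

lemma A_0_nth: "A 0 $ x $ y = of_bool (x = y)"
  by (simp add: assoc_scheme_A_0[OF scheme] mat_def)

lemma class_diag: "c x x = 0"
  using A_nth[of 0 x x] A_0_nth by simp

lemma sum_smult_A: "(\<Sum>k\<le>d. f k *\<^sub>m A k) = of_classes f"
proof -
  have "(\<Sum>k\<le>d. f k *\<^sub>m A k) $ x $ y = (\<Sum>k\<in>{c x y}. f k)" for x y
    unfolding cmat_sum_nth using class_le[of x y]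
    by (intro sum.mono_neutral_cong_right) (auto simp: A_nth)
  then show ?thesis by (simp add: vec_eq_iff)
qed

lemma of_classes_eq_iff: "of_classes f = of_classes g \<longleftrightarrow> (\<forall>k\<le>d. f k = g k)"
proof
  assume "of_classes f = of_classes g"
  then have "f (c x y) = g (c x y)" for x y by (metis of_classes_nth)
  then show "\<forall>k\<le>d. f k = g k" using class_surj by metis
qed (simp add: vec_eq_iff class_le)

lemma of_classes_eq_0_iff: "of_classes f = 0 \<longleftrightarrow> (\<forall>k\<le>d. f k = 0)"
  using of_classes_eq_iff[of f "\<lambda>_. 0"] by (simp add: vec_eq_iff)

lemma span_over_iff: "M \<in> span_over K d A \<longleftrightarrow> (\<exists>f. (\<forall>k\<le>d. f k \<in> K) \<and> M = of_classes f)"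
  unfolding span_over_def sum_smult_A by auto

lemma of_classes_add: "of_classes f + of_classes g = of_classes (\<lambda>k. f k + g k)"
  by (simp add: vec_eq_iff)

lemma of_classes_smult: "a *\<^sub>m of_classes f = of_classes (\<lambda>k. a * f k)"
  by (simp add: vec_eq_iff)

lemma of_classes_schur: "of_classes f \<circ>\<^sub>S of_classes g = of_classes (\<lambda>k. f k * g k)"
  by (simp add: vec_eq_iff)

lemma of_classes_mult_commute: "of_classes f ** of_classes g = of_classes g ** of_classes f"
proof -
  have expand: "of_classes f ** of_classes g = (\<Sum>l\<le>d. \<Sum>k\<le>d. f k *\<^sub>m (g l *\<^sub>m (A k ** A l)))"
    for f g
    unfolding sum_smult_A[symmetric]
    by (simp add: matrix_mult_sum_left matrix_mult_sum_right smult_mat_mult_left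
        smult_mat_mult_right smult_mat_sum smult_mat_commute)
  have "A k ** A l = A l ** A k" if "k \<le> d" "l \<le> d" for k l
    using assoc_scheme_commute[OF scheme that] .
  then show ?thesis
    unfolding expand by (subst (2) sum.swap) (auto intro!: sum.cong simp: smult_mat_commute)
qed

lemma all_ones_eq_of_classes: "all_ones = of_classes (\<lambda>_. 1)"
  by (simp add: vec_eq_iff all_ones_def)

definition transp_class :: "nat \<Rightarrow> nat" where
  "transp_class k = (SOME j. j \<le> d \<and> transpose (A k) = A j)"

lemma transp_class: "k \<le> d \<Longrightarrow> transp_class k \<le> d \<and> transpose (A k) = A (transp_class k)"
  unfolding transp_class_def
  by (rule someI_ex) (use assoc_scheme_transpose[OF scheme] in blast)

lemma class_swap: "c y x = transp_class (c x y)"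
proof -
  note t = transp_class[OF class_le[of x y]]
  have "A (transp_class (c x y)) $ y $ x = transpose (A (c x y)) $ y $ x" by (simp only: t)
  also have "\<dots> = 1" by (simp add: transpose_def A_nth class_le)
  finally show ?thesis by (simp add: A_nth t)
qed

lemma ctrans_of_classes: "ctrans (of_classes f) = of_classes (\<lambda>l. cnj (f (transp_class l)))"
  by (simp add: vec_eq_iff class_swap[symmetric])

lemma A_mult_A_nth:
  assumes "i \<le> d" "j \<le> d"
  shows "(A i ** A j) $ x $ y = of_nat (card {z. c x z = i \<and> c z y = j})"
  using assms by (simp add: matrix_mult_nth A_nth of_bool_conj[symmetric])

lemma A_mult_A_in_span:
  assumes K: "is_subfield K" and "i \<le> d" "j \<le> d"
  shows "A i ** A j \<in> span_over K d A"
proof -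
  obtain f where f: "A i ** A j = of_classes f"
    using assoc_scheme_mult[OF scheme assms(2,3)] unfolding span_over_iff by blast
  have "f l \<in> K" if l: "l \<le> d" for l
  proof -
    obtain x y where "c x y = l" using class_surj[OF l] by blast
    then show ?thesis
      using f A_mult_A_nth[OF assms(2,3), of x y] of_nat_in_subfield[OF K] by (metis of_classes_nth)
  qed
  then show ?thesis using f unfolding span_over_iff by blast
qed

lemma A_mult_A_schur_A_0_neq_0_iff:
  assumes "i \<le> d" "j \<le> d"
  shows "(A i ** A j) \<circ>\<^sub>S A 0 \<noteq> 0 \<longleftrightarrow> j = transp_class i"
proof -
  have "(A i ** A j) \<circ>\<^sub>S A 0 \<noteq> 0 \<longleftrightarrow> (\<exists>x z. c x z = i \<and> c z x = j)"
    using assms by (auto simp: vec_eq_iff A_mult_A_nth A_0_nth card_eq_0_iff)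
  also have "\<dots> \<longleftrightarrow> j = transp_class i"
    using class_surj[OF assms(1)] by (metis class_swap)
  finally show ?thesis .
qed

lemma of_classes_schur_A_0: "of_classes f \<circ>\<^sub>S A 0 = f 0 *\<^sub>m A 0"
  by (simp add: vec_eq_iff A_0_nth class_diag)

lemma of_classes_in_span: "\<forall>k\<le>d. f k \<in> K \<Longrightarrow> of_classes f \<in> span_over K d A"
  unfolding span_over_iff by blast

lemma span_add:
  assumes "is_subfield K" "M \<in> span_over K d A" "N \<in> span_over K d A"
  shows "M + N \<in> span_over K d A"
proof -
  obtain f g where "\<forall>k\<le>d. f k \<in> K" "\<forall>k\<le>d. g k \<in> K" "M = of_classes f" "N = of_classes g"
    using assms(2,3) unfolding span_over_iff by blast
  with assms(1) show ?thesis unfolding span_over_iff is_subfield_def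
    by (intro exI[of _ "\<lambda>k. f k + g k"]) (auto simp: of_classes_add)
qed

lemma span_smult:
  assumes "is_subfield K" "a \<in> K" "M \<in> span_over K d A"
  shows "a *\<^sub>m M \<in> span_over K d A"
proof -
  obtain f where "\<forall>k\<le>d. f k \<in> K" "M = of_classes f"
    using assms(3) unfolding span_over_iff by blast
  with assms(1,2) show ?thesis unfolding span_over_iff is_subfield_def
    by (intro exI[of _ "\<lambda>k. a * f k"]) (auto simp: of_classes_smult)
qed

lemma A_in_span:
  assumes "is_subfield K" "k \<le> d" shows "A k \<in> span_over K d A"
  using assms unfolding span_over_iff is_subfield_def
  by (auto simp: A_eq_of_classes intro!: exI[of _ "\<lambda>l. of_bool (l = k)"])

end

locale scheme_endomorphism = scheme_classes d A c
  for d :: nat and A :: "nat \<Rightarrow> 'n::finite cmat" and c :: "'n \<Rightarrow> 'n \<Rightarrow> nat" +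
  fixes K :: "complex set" and \<psi> :: "'n cmat \<Rightarrow> 'n cmat"
  assumes subfield: "is_subfield K"
    and linear: "E_linear_on K (span_over K d A) \<psi>"
    and nonzero: "\<exists>M\<in>span_over K d A. \<psi> M \<noteq> 0"
    and hom: "\<forall>M\<in>span_over K d A. \<forall>N\<in>span_over K d A.
      \<psi> (M ** N) = \<psi> M ** \<psi> N \<and> \<psi> (M \<circ>\<^sub>S N) = \<psi> M \<circ>\<^sub>S \<psi> N"
begin

abbreviation S :: "'n cmat set" where "S \<equiv> span_over K d A"

lemma psi_mult: "M \<in> S \<Longrightarrow> N \<in> S \<Longrightarrow> \<psi> (M ** N) = \<psi> M ** \<psi> N"
  using hom by blast

lemma psi_schur: "M \<in> S \<Longrightarrow> N \<in> S \<Longrightarrow> \<psi> (M \<circ>\<^sub>S N) = \<psi> M \<circ>\<^sub>S \<psi> N"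
  using hom by blast

lemma psi_in_span: "M \<in> S \<Longrightarrow> \<psi> M \<in> S"
  using linear by (simp add: E_linear_on_def)

lemma psi_add: "M \<in> S \<Longrightarrow> N \<in> S \<Longrightarrow> \<psi> (M + N) = \<psi> M + \<psi> N"
  using linear by (simp add: E_linear_on_def)

lemma psi_smult: "a \<in> K \<Longrightarrow> M \<in> S \<Longrightarrow> \<psi> (a *\<^sub>m M) = a *\<^sub>m \<psi> M"
  using linear by (simp add: E_linear_on_def)

lemma A_in_S: "k \<le> d \<Longrightarrow> A k \<in> S"
  using A_in_span[OF subfield] .

lemma zero_in_span: "0 \<in> S"
  using subfield unfolding span_over_iff is_subfield_def
  by (intro exI[of _ "\<lambda>_. 0"]) (simp add: vec_eq_iff)

lemma psi_0: "\<psi> 0 = 0"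
  using psi_add[OF zero_in_span zero_in_span] by simp

lemma psi_sum_smult_A:
  assumes "finite F" "F \<subseteq> {..d}" "\<And>k. k \<le> d \<Longrightarrow> f k \<in> K"
  shows "(\<Sum>k\<in>F. f k *\<^sub>m A k) \<in> S \<and> \<psi> (\<Sum>k\<in>F. f k *\<^sub>m A k) = (\<Sum>k\<in>F. f k *\<^sub>m \<psi> (A k))"
  using assms(1,2)
proof (induction F rule: finite_induct)
  case empty
  then show ?case using zero_in_span psi_0 by simp
next
  case (insert k F)
  then have "k \<le> d" by auto
  then have "f k *\<^sub>m A k \<in> S" "\<psi> (f k *\<^sub>m A k) = f k *\<^sub>m \<psi> (A k)"
    using span_smult[OF subfield] psi_smult assms(3) A_in_S by auto
  with insert show ?case by (simp add: span_add[OF subfield] psi_add)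
qed

lemma psi_of_classes_sum:
  "(\<And>k. k \<le> d \<Longrightarrow> f k \<in> K) \<Longrightarrow> \<psi> (of_classes f) = (\<Sum>k\<le>d. f k *\<^sub>m \<psi> (A k))"
  using psi_sum_smult_A[of "{..d}" f] by (simp add: sum_smult_A)

definition psi_A_coeff :: "nat \<Rightarrow> nat \<Rightarrow> complex" where
  "psi_A_coeff k = (SOME g. \<psi> (A k) = of_classes g)"

lemma psi_A_eq_of_classes:
  assumes "k \<le> d" shows "\<psi> (A k) = of_classes (psi_A_coeff k)"
proof -
  obtain g where "\<psi> (A k) = of_classes g"
    using psi_in_span[OF A_in_S[OF assms]] unfolding span_over_iff by blast
  then show ?thesis
    unfolding psi_A_coeff_def by (rule someI[where P = "\<lambda>g. \<psi> (A k) = of_classes g"])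
qed

lemma psi_A_coeff_0_or_1:
  assumes k: "k \<le> d" and "l \<le> d"
  shows "psi_A_coeff k l = 0 \<or> psi_A_coeff k l = 1"
proof -
  have "A k \<circ>\<^sub>S A k = A k" using k by (simp add: vec_eq_iff A_nth)
  then have "of_classes (\<lambda>l. psi_A_coeff k l * psi_A_coeff k l) = of_classes (psi_A_coeff k)"
    using psi_schur[OF A_in_S A_in_S, of k k] k
    by (simp add: psi_A_eq_of_classes of_classes_schur)
  then have "psi_A_coeff k l * psi_A_coeff k l = psi_A_coeff k l"
    using assms(2) by (simp add: of_classes_eq_iff)
  then have "psi_A_coeff k l * (psi_A_coeff k l - 1) = 0" by (simp add: algebra_simps)
  then show ?thesis by simp
qed

lemma psi_A_coeff_disjoint:
  assumes "i \<le> d" "j \<le> d" "i \<noteq> j" "l \<le> d"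
  shows "psi_A_coeff i l * psi_A_coeff j l = 0"
proof -
  have "A i \<circ>\<^sub>S A j = 0" using assms by (auto simp: vec_eq_iff A_nth)
  then have "of_classes (\<lambda>l. psi_A_coeff i l * psi_A_coeff j l) = 0"
    using psi_schur[OF A_in_S A_in_S, of i j] assms
    by (simp add: psi_A_eq_of_classes of_classes_schur psi_0)
  then show ?thesis using assms(4) by (simp add: of_classes_eq_0_iff)
qed

lemma psi_A_0: "\<psi> (A 0) = A 0"
proof -
  have A_0: "A 0 = mat 1" using assoc_scheme_A_0[OF scheme] .
  let ?B = "\<psi> (A 0)"
  have B: "?B = of_classes (psi_A_coeff 0)" using psi_A_eq_of_classes by simp
  have "zero_one_mat ?B"
    unfolding zero_one_mat_def B using psi_A_coeff_0_or_1 class_le by simp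
  moreover have "?B ** ?B = ?B" using psi_mult[OF A_in_S A_in_S, of 0 0] A_0 by simp
  moreover have "?B \<noteq> 0"
  proof
    assume "?B = 0"
    obtain M where M: "M \<in> S" "\<psi> M \<noteq> 0" using nonzero by blast
    have "\<psi> M = ?B ** \<psi> M" using psi_mult[OF A_in_S M(1), of 0] A_0 by simp
    with \<open>?B = 0\<close> M(2) show False by (simp add: vec_eq_iff matrix_mult_nth)
  qed
  moreover have "?B ** all_ones = all_ones ** ?B"
    unfolding B all_ones_eq_of_classes by (rule of_classes_mult_commute)
  moreover have "?B $ x $ x = ?B $ y $ y" for x y by (simp add: B class_diag)
  ultimately show ?thesis using zero_one_idempotent_eq_1 A_0 by metis
qed

text \<open>The diagonal of A_i A_i^T is a nonzero multiple of the identity, which is fixed.\<close>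
lemma psi_A_mult_psi_A_transp_schur_A_0_neq_0:
  assumes i: "i \<le> d"
  shows "(\<psi> (A i) ** \<psi> (A (transp_class i))) \<circ>\<^sub>S A 0 \<noteq> 0"
proof -
  have i': "transp_class i \<le> d" using transp_class[OF i] by blast
  let ?X = "A i ** A (transp_class i)"
  have X: "?X \<in> S" using A_mult_A_in_span[OF subfield i i'] .
  then obtain f where f: "\<forall>k\<le>d. f k \<in> K" "?X = of_classes f" unfolding span_over_iff by blast
  have diag: "?X \<circ>\<^sub>S A 0 = f 0 *\<^sub>m A 0" using f(2) of_classes_schur_A_0 by simp
  then have "f 0 *\<^sub>m A 0 \<noteq> 0" using A_mult_A_schur_A_0_neq_0_iff[OF i i'] by simp
  moreover have "\<psi> (?X \<circ>\<^sub>S A 0) = f 0 *\<^sub>m A 0"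
    using diag psi_smult[OF _ A_in_S] f(1) psi_A_0 by simp
  moreover have "\<psi> (?X \<circ>\<^sub>S A 0) = (\<psi> (A i) ** \<psi> (A (transp_class i))) \<circ>\<^sub>S A 0"
    using psi_schur[OF X A_in_S] psi_mult[OF A_in_S A_in_S] i i' psi_A_0 by simp
  ultimately show ?thesis by simp
qed

lemma psi_A_neq_0:
  assumes k: "k \<le> d" shows "\<psi> (A k) \<noteq> 0"
proof
  assume "\<psi> (A k) = 0"
  then have "(\<psi> (A k) ** \<psi> (A (transp_class k))) \<circ>\<^sub>S A 0 = 0"
    by (simp add: vec_eq_iff matrix_mult_nth)
  with psi_A_mult_psi_A_transp_schur_A_0_neq_0[OF k] show False by blast
qed

definition class_perm :: "nat \<Rightarrow> nat" where
  "class_perm k = (SOME l. l \<le> d \<and> psi_A_coeff k l = 1)"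

lemma class_perm:
  assumes k: "k \<le> d" shows "class_perm k \<le> d \<and> psi_A_coeff k (class_perm k) = 1"
proof -
  obtain l where "l \<le> d" "psi_A_coeff k l \<noteq> 0"
    using psi_A_neq_0[OF k] unfolding psi_A_eq_of_classes[OF k] of_classes_eq_0_iff by blast
  then have "\<exists>l. l \<le> d \<and> psi_A_coeff k l = 1" using psi_A_coeff_0_or_1[OF k] by blast
  then show ?thesis unfolding class_perm_def by (rule someI_ex)
qed

lemma inj_on_class_perm: "inj_on class_perm {..d}"
proof (rule inj_onI)
  fix i j assume i: "i \<in> {..d}" and j: "j \<in> {..d}" and eq: "class_perm i = class_perm j"
  show "i = j"
  proof (rule ccontr)
    assume "i \<noteq> j"
    then have "psi_A_coeff i (class_perm i) * psi_A_coeff j (class_perm i) = 0"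
      using i j class_perm by (intro psi_A_coeff_disjoint) auto
    then show False using i j eq class_perm[of i] class_perm[of j] by simp
  qed
qed

lemma bij_betw_class_perm: "bij_betw class_perm {..d} {..d}"
proof -
  have "class_perm ` {..d} \<subseteq> {..d}" using class_perm by auto
  then show ?thesis
    using endo_inj_surj[OF finite_atMost _ inj_on_class_perm] inj_on_class_perm
    by (simp add: bij_betw_def)
qed

lemma psi_A:
  assumes k: "k \<le> d" shows "\<psi> (A k) = A (class_perm k)"
proof -
  have coeff_eq: "psi_A_coeff k l = of_bool (l = class_perm k)" if l: "l \<le> d" for l
  proof (cases "l = class_perm k")
    case False
    have "l \<in> class_perm ` {..d}" using l bij_betw_class_perm by (simp add: bij_betw_def)
    then obtain i where "i \<le> d" "l = class_perm i" by auto
    then show ?thesis using psi_A_coeff_disjoint[of i k l] class_perm False k l by auto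
  qed (use class_perm[OF k] in simp)
  have "\<psi> (A k) = of_classes (psi_A_coeff k)" by (rule psi_A_eq_of_classes[OF k])
  also have "\<dots> = of_classes (\<lambda>l. of_bool (l = class_perm k))"
    using coeff_eq by (simp add: of_classes_eq_iff)
  also have "\<dots> = A (class_perm k)"
    using class_perm[OF k] by (simp add: A_eq_of_classes)
  finally show ?thesis .
qed

definition class_perm_inv :: "nat \<Rightarrow> nat" where
  "class_perm_inv = the_inv_into {..d} class_perm"

lemma class_perm_inv: "l \<le> d \<Longrightarrow> class_perm_inv l \<le> d \<and> class_perm (class_perm_inv l) = l"
  unfolding class_perm_inv_def
  using bij_betw_the_inv_into[OF bij_betw_class_perm] f_the_inv_into_f_bij_betw[OF bij_betw_class_perm]
  by (auto simp: bij_betw_def)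

lemma class_perm_inv_class_perm: "k \<le> d \<Longrightarrow> class_perm_inv (class_perm k) = k"
  unfolding class_perm_inv_def using inj_on_class_perm by (simp add: the_inv_into_f_f)

lemma psi_of_classes:
  assumes f: "\<And>k. k \<le> d \<Longrightarrow> f k \<in> K"
  shows "\<psi> (of_classes f) = of_classes (\<lambda>l. f (class_perm_inv l))"
proof -
  have "\<psi> (of_classes f) = (\<Sum>k\<le>d. f k *\<^sub>m A (class_perm k))"
    using psi_of_classes_sum[OF f] psi_A by simp
  also have "\<dots> = (\<Sum>k\<le>d. (\<lambda>l. f (class_perm_inv l) *\<^sub>m A l) (class_perm k))"
    using class_perm_inv_class_perm by simp
  also have "\<dots> = (\<Sum>l\<le>d. f (class_perm_inv l) *\<^sub>m A l)"
    by (rule sum.reindex_bij_betw[OF bij_betw_class_perm])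
  finally show ?thesis by (simp add: sum_smult_A)
qed

lemma bij_betw_psi: "bij_betw \<psi> S S"
proof -
  have "inj_on \<psi> S"
  proof (rule inj_onI)
    fix M N assume "M \<in> S" "N \<in> S" and eq: "\<psi> M = \<psi> N"
    then obtain f g where f: "\<forall>k\<le>d. f k \<in> K" "M = of_classes f"
      and g: "\<forall>k\<le>d. g k \<in> K" "N = of_classes g"
      unfolding span_over_iff by blast
    have same: "\<forall>l\<le>d. f (class_perm_inv l) = g (class_perm_inv l)"
      using eq f g by (simp add: psi_of_classes of_classes_eq_iff)
    have "f k = g k" if k: "k \<le> d" for k
      using same[rule_format, of "class_perm k"] class_perm[OF k]
      by (simp add: class_perm_inv_class_perm[OF k])
    then show "M = N" using f g by (simp add: of_classes_eq_iff)
  qed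
  moreover have "S \<subseteq> \<psi> ` S"
  proof
    fix N assume "N \<in> S"
    then obtain g where g: "\<forall>k\<le>d. g k \<in> K" "N = of_classes g" unfolding span_over_iff by blast
    then have gK: "\<forall>k\<le>d. g (class_perm k) \<in> K" using class_perm by blast
    have "\<psi> (of_classes (\<lambda>k. g (class_perm k))) = of_classes (\<lambda>l. g (class_perm (class_perm_inv l)))"
      using gK by (simp add: psi_of_classes)
    also have "\<dots> = N" using g(2) class_perm_inv by (simp add: of_classes_eq_iff)
    finally have "\<psi> (of_classes (\<lambda>k. g (class_perm k))) = N" .
    moreover have "of_classes (\<lambda>k. g (class_perm k)) \<in> S" using gK by (simp add: of_classes_in_span)
    ultimately show "N \<in> \<psi> ` S" by blast
  qed
  ultimately show ?thesis using psi_in_span by (auto simp: bij_betw_def)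
qed

lemma class_perm_transp:
  assumes k: "k \<le> d" shows "class_perm (transp_class k) = transp_class (class_perm k)"
proof -
  have k': "transp_class k \<le> d" using transp_class[OF k] by blast
  have "(A (class_perm k) ** A (class_perm (transp_class k))) \<circ>\<^sub>S A 0 \<noteq> 0"
    using psi_A_mult_psi_A_transp_schur_A_0_neq_0[OF k] by (simp add: psi_A k k')
  then show ?thesis
    using A_mult_A_schur_A_0_neq_0_iff class_perm[OF k] class_perm[OF k'] by blast
qed

lemma class_perm_inv_transp:
  assumes l: "l \<le> d" shows "class_perm_inv (transp_class l) = transp_class (class_perm_inv l)"
proof -
  obtain k where k: "k \<le> d" "class_perm_inv l = k" "class_perm k = l"
    using class_perm_inv[OF l] by blast
  have "class_perm_inv (transp_class l) = class_perm_inv (class_perm (transp_class k))"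
    using class_perm_transp[OF k(1)] k(3) by simp
  also have "\<dots> = transp_class k"
    using class_perm_inv_class_perm transp_class[OF k(1)] by blast
  finally show ?thesis using k(2) by simp
qed

lemma psi_ctrans:
  assumes cnj_closed: "\<forall>x\<in>K. cnj x \<in> K" and M: "M \<in> S"
  shows "\<psi> (ctrans M) = ctrans (\<psi> M)"
proof -
  obtain f where f: "\<forall>k\<le>d. f k \<in> K" "M = of_classes f" using M unfolding span_over_iff by blast
  have "\<forall>l\<le>d. cnj (f (transp_class l)) \<in> K" using f(1) transp_class cnj_closed by blast
  then have "\<psi> (ctrans M) = of_classes (\<lambda>l. cnj (f (transp_class (class_perm_inv l))))"
    using f(2) by (simp add: ctrans_of_classes psi_of_classes)
  also have "\<dots> = of_classes (\<lambda>l. cnj (f (class_perm_inv (transp_class l))))"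
    using class_perm_inv_transp by (simp add: of_classes_eq_iff)
  also have "\<dots> = ctrans (\<psi> M)"
    using f by (simp add: psi_of_classes ctrans_of_classes)
  finally show ?thesis .
qed

end

theorem theorem3p3:
  fixes A :: "nat \<Rightarrow> 'n::finite cmat" and d :: nat
    and K :: "complex set" and \<psi> :: "'n cmat \<Rightarrow> 'n cmat"
  assumes "assoc_scheme d A"
    and "is_subfield K"
    and "splitting_field d A \<subseteq> K"
    and "\<forall>x\<in>K. cnj x \<in> K"
    and "E_linear_on K (span_over K d A) \<psi>"
    and "\<exists>M\<in>span_over K d A. \<psi> M \<noteq> 0"
  shows "BM_automorphism K d A \<psi> \<longleftrightarrow>
          (\<forall>M\<in>span_over K d A. \<forall>N\<in>span_over K d A.
              \<psi> (M ** N) = \<psi> M ** \<psi> N \<and> \<psi> (M \<circ>\<^sub>S N) = \<psi> M \<circ>\<^sub>S \<psi> N)"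
    (is "_ \<longleftrightarrow> ?hom")
proof
  show "?hom" if "BM_automorphism K d A \<psi>"
    using that unfolding BM_automorphism_def Let_def by blast
next
  assume hom: ?hom
  obtain c where "\<And>x y. c x y \<le> d" "\<And>k. k \<le> d \<Longrightarrow> A k = (\<chi> x y. of_bool (c x y = k))"
    using assoc_scheme_class_function[OF assms(1)] by blast
  then interpret scheme_endomorphism d A c K \<psi>
    using assms(1,2,5,6) hom by unfold_locales
  show "BM_automorphism K d A \<psi>"
    unfolding BM_automorphism_def Let_def
    using assms(5) hom bij_betw_psi psi_ctrans[OF assms(4)] by blast
qed

end
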